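(* For $\omega=(\omega_1,\omega_2)\in\{0,1\}^2$ and $E\in\mathbb{R}$, let $A^\omega(E)\in\mathrm{Sp}_2(\mathbb{R})$ be the $4\times4$ real matrix defined by ${}^t(u_1(1),u_2(1),u_1'(1),u_2'(1))=A^\omega(E)\,{}^t(u_1(0),u_2(0),u_1'(0),u_2'(0))$ for every solution $u=(u_1,u_2)$ on $[0,1]$ of the system $-u''+\begin{pmatrix}\omega_1&1\\1&\omega_2\end{pmatrix}u=Eu$. Let $\mathcal{O}\subset\mathrm{Sp}_2(\mathbb{R})$ be a neighborhood of the identity as described in the context. Then for every $E\in(2,+\infty)$ and every $\omega\in\{0,1\}^2$ there exists an integer $m_\omega(E)\ge1$ such that $(A^\omega(E))^{m_\omega(E)}\in\mathcal{O}$.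
   Context: $\mathrm{Sp}_2(\mathbb{R})$ denotes the real symplectic group of $4\times 4$ matrices, with Lie algebra $\mathfrak{sp}_2(\mathbb{R})$. $\mathcal{O}$ is a neighborhood of the identity in $\mathrm{Sp}_2(\mathbb{R})$ on which $\log=\exp^{-1}$ is a well-defined diffeomorphism and such that elements $g_1,\dots,g_m\in\mathcal{O}$ generate a dense subgroup of $\mathrm{Sp}_2(\mathbb{R})$ if and only if $\log g_1,\dots,\log g_m$ generate $\mathfrak{sp}_2(\mathbb{R})$ as a Lie algebra (such a neighborhood exists by a theorem of Breuillard and Gelander). *)

theory Defs
  imports "HOL-Analysis.Analysis" "HOL-Library.Numeral_Type"
begin

type_synonym mat4 = "real^4^4"

primrec mpow :: "mat4 \<Rightarrow> nat \<Rightarrow> mat4" where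
  "mpow M 0 = mat 1"
| "mpow M (Suc n) = M ** mpow M n"

definition Jsymp :: mat4 where
  "Jsymp = vector [vector [0,0,1,0], vector [0,0,0,1], vector [-1,0,0,0], vector [0,-1,0,0]]"

definition Sp2 :: "mat4 set" where
  "Sp2 = {M. transpose M ** Jsymp ** M = Jsymp}"

definition sp2 :: "mat4 set" where
  "sp2 = {X. transpose X ** Jsymp + Jsymp ** X = 0}"

definition mexp :: "mat4 \<Rightarrow> mat4" where
  "mexp X = (\<Sum>k. (1 / fact k) *\<^sub>R mpow X k)"

inductive_set gen_group :: "mat4 set \<Rightarrow> mat4 set" for G where
  gg_one: "mat 1 \<in> gen_group G"
| gg_gen: "g \<in> G \<Longrightarrow> g \<in> gen_group G"
| gg_inv: "g \<in> G \<Longrightarrow> matrix_inv g \<in> gen_group G"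
| gg_mult: "a \<in> gen_group G \<Longrightarrow> b \<in> gen_group G \<Longrightarrow> a ** b \<in> gen_group G"

inductive_set gen_lie :: "mat4 set \<Rightarrow> mat4 set" for S where
  gl_gen: "X \<in> S \<Longrightarrow> X \<in> gen_lie S"
| gl_zero: "0 \<in> gen_lie S"
| gl_add: "X \<in> gen_lie S \<Longrightarrow> Y \<in> gen_lie S \<Longrightarrow> X + Y \<in> gen_lie S"
| gl_scale: "X \<in> gen_lie S \<Longrightarrow> c *\<^sub>R X \<in> gen_lie S"
| gl_bracket: "X \<in> gen_lie S \<Longrightarrow> Y \<in> gen_lie S \<Longrightarrow> X ** Y - Y ** X \<in> gen_lie S"

definition Vpot :: "real \<Rightarrow> real \<Rightarrow> real^2^2" where
  "Vpot w1 w2 = vector [vector [w1, 1], vector [1, w2]]"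

definition is_solution :: "real \<Rightarrow> real \<Rightarrow> real \<Rightarrow> (real \<Rightarrow> real^2) \<Rightarrow> (real \<Rightarrow> real^2) \<Rightarrow> bool" where
  "is_solution w1 w2 E u u' \<longleftrightarrow>
     (\<forall>t\<in>{0..1}. (u has_vector_derivative u' t) (at t within {0..1}) \<and>
                 (u' has_vector_derivative (Vpot w1 w2 *v u t - E *\<^sub>R u t)) (at t within {0..1}))"

definition state :: "real^2 \<Rightarrow> real^2 \<Rightarrow> real^4" where
  "state x y = vector [x$1, x$2, y$1, y$2]"

definition transfer :: "real \<Rightarrow> real \<Rightarrow> real \<Rightarrow> mat4" where
  "transfer w1 w2 E = (THE A. \<forall>u u'. is_solution w1 w2 E u u' \<longrightarrow>
       state (u 1) (u' 1) = A *v state (u 0) (u' 0))"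

end

theory Submission
  imports Defs
begin

text \<open>
  The potential matrix \<open>V = [[w1, 1], [1, w2]]\<close> is symmetric, with orthogonal eigenvectors
  \<open>(1, a)\<close> and \<open>(-a, 1)\<close> for eigenvalues \<open>w1 + a\<close> and \<open>w2 - a\<close>. Projecting a solution onto
  them decouples the system into two scalar oscillators \<open>g'' = -k\<^sup>2 g\<close> with \<open>k\<^sup>2 = E - \<lambda>\<close>,
  and \<open>k\<^sup>2 > 0\<close> because \<open>E > 2\<close> exceeds the largest eigenvalue of \<open>V\<close> when \<open>w \<in> {0,1}\<^sup>2\<close>.
  Hence in these coordinates the transfer matrix is a pair of rotations by the angles
  \<open>k\<^sub>a\<close> and \<open>k\<^sub>b\<close>, and its \<open>m\<close>-th power is the pair of rotations by \<open>m k\<^sub>a\<close> and \<open>m k\<^sub>b\<close>.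
  Dirichlet's simultaneous approximation theorem yields positive integers \<open>m\<close> for which both
  angles are arbitrarily close to \<open>2\<pi>\<int>\<close>, so these powers converge to the identity and
  eventually enter every neighbourhood of it. Only the fact that \<open>O\<close> is a neighbourhood of
  the identity in \<open>Sp\<^sub>2(\<real>)\<close> is needed.
\<close>

lemma vector_4 [simp]:
  "(vector [x1, x2, x3, x4] :: ('a::zero)^4) $ 1 = x1"
  "(vector [x1, x2, x3, x4] :: ('a::zero)^4) $ 2 = x2"
  "(vector [x1, x2, x3, x4] :: ('a::zero)^4) $ 3 = x3"
  "(vector [x1, x2, x3, x4] :: ('a::zero)^4) $ 4 = x4"
  unfolding vector_def by simp_all

lemma state_nth [simp]:
  "state x y $ 1 = x $ 1" "state x y $ 2 = x $ 2" "state x y $ 3 = y $ 1" "state x y $ 4 = y $ 2"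
  by (simp_all add: state_def)

lemma Jsymp_mult: "Jsymp *v s = vector [s $ 3, s $ 4, - s $ 1, - s $ 2]"
  by (simp add: vec_eq_iff forall_4 Jsymp_def matrix_vector_mult_def sum_4)

lemma Vpot_mult: "Vpot w1 w2 *v x = vector [w1 * x $ 1 + x $ 2, x $ 1 + w2 * x $ 2]"
  by (simp add: vec_eq_iff forall_2 Vpot_def matrix_vector_mult_def sum_2)

lemma Sp2I_inner:
  assumes "\<And>s t. inner (M *v s) (Jsymp *v (M *v t)) = inner s (Jsymp *v t)"
  shows "M \<in> Sp2"
proof -
  have "(transpose M ** Jsymp ** M) *v x = Jsymp *v x" for x
  proof (rule vector_eq_ldot[THEN iffD1, rule_format])
    fix y
    have "inner y ((transpose M ** Jsymp ** M) *v x) = inner y (transpose M *v (Jsymp *v (M *v x)))"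
      by (simp add: matrix_vector_mul_assoc matrix_mul_assoc)
    also have "\<dots> = inner (M *v y) (Jsymp *v (M *v x))"
      by (metis dot_lmul_matrix inner_commute vector_transpose_matrix)
    also have "\<dots> = inner y (Jsymp *v x)"
      by (rule assms)
    finally show "inner y ((transpose M ** Jsymp ** M) *v x) = inner y (Jsymp *v x)" .
  qed
  then show ?thesis
    unfolding Sp2_def by (simp add: matrix_eq)
qed

lemma has_vector_derivative_vector2:
  assumes "(f has_real_derivative f') (at x within S)" "(g has_real_derivative g') (at x within S)"
  shows "((\<lambda>t. vector [f t, g t] :: real^2) has_vector_derivative vector [f', g']) (at x within S)"
proof -
  have e: "(\<lambda>t. vector [f t, g t] :: real^2) = (\<lambda>t. f t *\<^sub>R vector [1, 0] + g t *\<^sub>R vector [0, 1])"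
    and e': "vector [f', g'] = f' *\<^sub>R (vector [1, 0] :: real^2) + g' *\<^sub>R vector [0, 1]"
    by (auto simp: vec_eq_iff forall_2)
  show ?thesis
    unfolding e e' by (rule derivative_eq_intros assms refl | simp)+
qed

lemma has_real_derivative_coord_combination:
  fixes u :: "real \<Rightarrow> real^2"
  assumes "(u has_vector_derivative u') F"
  shows "((\<lambda>t. c1 * u t $ 1 + c2 * u t $ 2) has_real_derivative (c1 * u' $ 1 + c2 * u' $ 2)) F"
proof -
  have inner: "inner (vector [c1, c2]) v = c1 * v $ 1 + c2 * v $ 2" for v :: "real^2"
    by (simp add: inner_vec_def sum_2)
  show ?thesis
    using bounded_linear.has_vector_derivative[OF bounded_linear_inner_right[of "vector [c1, c2]"] assms]
    unfolding inner has_real_derivative_iff_has_vector_derivative by simp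
qed

lemma simultaneous_return_of_rotations:
  fixes \<theta> :: "nat \<Rightarrow> real" and n :: nat
  obtains Q :: "nat \<Rightarrow> nat" where "\<And>N. 0 < Q N"
    and "\<And>i. i < n \<Longrightarrow> (\<lambda>N. cos (real (Q N) * \<theta> i)) \<longlonglongrightarrow> 1"
    and "\<And>i. i < n \<Longrightarrow> (\<lambda>N. sin (real (Q N) * \<theta> i)) \<longlonglongrightarrow> 0"
proof -
  have "\<exists>q p. 0 < q \<and> (\<forall>i<n. \<bar>of_int q * (\<theta> i / (2*pi)) - of_int (p i)\<bar> < 1 / real (Suc N))"
    for N
    by (rule Dirichlet_approx_simult[of "Suc N" n "\<lambda>i. \<theta> i / (2*pi)"]) auto
  then obtain q P where q: "\<And>N. 0 < q N"
    and P: "\<And>N i. i < n \<Longrightarrow> \<bar>of_int (q N) * (\<theta> i / (2*pi)) - of_int (P N i)\<bar> < 1 / real (Suc N)"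
    by metis
  define r where "r i N = of_int (q N) * \<theta> i - 2*pi * of_int (P N i)" for i N
  have r_bound: "norm (r i N) \<le> 2*pi * inverse (real (Suc N))" if "i < n" for i N
  proof -
    have "norm (r i N) = 2*pi * \<bar>of_int (q N) * (\<theta> i / (2*pi)) - of_int (P N i)\<bar>"
    proof -
      have "r i N = 2*pi * (of_int (q N) * (\<theta> i / (2*pi)) - of_int (P N i))"
        unfolding r_def by (simp add: right_diff_distrib)
      then show ?thesis
        using pi_gt_zero by (simp add: abs_mult)
    qed
    also have "\<dots> \<le> 2*pi * inverse (real (Suc N))"
      using P[OF that, of N] pi_gt_zero by (intro mult_left_mono) (simp_all add: inverse_eq_divide)
    finally show ?thesis .
  qed
  have r_tendsto: "r i \<longlonglongrightarrow> 0" if "i < n" for i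
  proof (rule Lim_null_comparison[OF always_eventually])
    show "\<forall>N. norm (r i N) \<le> 2*pi * inverse (real (Suc N))"
      using r_bound[OF that] by blast
    show "(\<lambda>N. 2*pi * inverse (real (Suc N))) \<longlonglongrightarrow> 0"
      using tendsto_mult_right_zero[OF LIMSEQ_inverse_real_of_nat] by simp
  qed
  have "of_int (q N) * \<theta> i = r i N + 2*pi * of_int (P N i)" for i N
    by (simp add: r_def)
  then have "cos (real (nat (q N)) * \<theta> i) = cos (r i N)" "sin (real (nat (q N)) * \<theta> i) = sin (r i N)"
    for i N
    using q[of N] by (simp_all add: cos_add sin_add)
  moreover have "(\<lambda>N. cos (r i N)) \<longlonglongrightarrow> 1" "(\<lambda>N. sin (r i N)) \<longlonglongrightarrow> 0" if "i < n" for i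
    using tendsto_cos[OF r_tendsto[OF that]] tendsto_sin[OF r_tendsto[OF that]] by simp_all
  ultimately show thesis
    using q by (intro that[of "\<lambda>N. nat (q N)"]) simp_all
qed

(* position and velocity at time \<theta> / k of the solution of g'' = -k\<^sup>2 g with g 0 = p, g' 0 = q *)
definition osc_pos :: "real \<Rightarrow> real \<Rightarrow> real \<Rightarrow> real \<Rightarrow> real" where
  "osc_pos k \<theta> p q = p * cos \<theta> + q * sin \<theta> / k"

definition osc_vel :: "real \<Rightarrow> real \<Rightarrow> real \<Rightarrow> real \<Rightarrow> real" where
  "osc_vel k \<theta> p q = q * cos \<theta> - p * k * sin \<theta>"

lemma osc_0 [simp]: "osc_pos k 0 p q = p" "osc_vel k 0 p q = q"
  by (simp_all add: osc_pos_def osc_vel_def)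

lemma osc_add:
  assumes "k \<noteq> 0"
  shows "osc_pos k \<alpha> (osc_pos k \<beta> p q) (osc_vel k \<beta> p q) = osc_pos k (\<alpha> + \<beta>) p q"
    and "osc_vel k \<alpha> (osc_pos k \<beta> p q) (osc_vel k \<beta> p q) = osc_vel k (\<alpha> + \<beta>) p q"
  using assms by (simp_all add: osc_pos_def osc_vel_def cos_add sin_add field_simps)

lemma osc_wronskian:
  assumes "k \<noteq> 0"
  shows "osc_pos k \<theta> p q * osc_vel k \<theta> p' q' - osc_vel k \<theta> p q * osc_pos k \<theta> p' q' = p * q' - q * p'"
proof -
  have sin_sq: "sin \<theta> * sin \<theta> = 1 - cos \<theta> * cos \<theta>"
    by (metis add_diff_cancel_right' power2_eq_square sin_cos_squared_add)
  show ?thesis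
    using assms by (simp add: osc_pos_def osc_vel_def field_simps sin_sq)
qed

lemma osc_pos_has_derivative:
  "k \<noteq> 0 \<Longrightarrow> ((\<lambda>t. osc_pos k (k * t) p q) has_real_derivative osc_vel k (k * t) p q) (at t within S)"
  unfolding osc_pos_def osc_vel_def
  by (rule derivative_eq_intros refl | simp add: field_simps)+

lemma osc_vel_has_derivative:
  "k \<noteq> 0 \<Longrightarrow> ((\<lambda>t. osc_vel k (k * t) p q) has_real_derivative - (k * k) * osc_pos k (k * t) p q) (at t within S)"
  unfolding osc_pos_def osc_vel_def
  by (rule derivative_eq_intros refl | simp add: field_simps)+

lemma harmonic_solution_unique:
  fixes g h :: "real \<Rightarrow> real"
  assumes k: "k \<noteq> 0" and S: "convex S" "0 \<in> S"
    and dg: "\<And>t. t \<in> S \<Longrightarrow> (g has_real_derivative h t) (at t within S)"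
    and dh: "\<And>t. t \<in> S \<Longrightarrow> (h has_real_derivative - (k * k) * g t) (at t within S)"
    and t: "t \<in> S"
  shows "g t = osc_pos k (k * t) (g 0) (h 0) \<and> h t = osc_vel k (k * t) (g 0) (h 0)"
proof -
  define dp where "dp t = g t - osc_pos k (k * t) (g 0) (h 0)" for t
  define dv where "dv t = h t - osc_vel k (k * t) (g 0) (h 0)" for t
  \<comment> \<open>the energy of the difference of two solutions is conserved\<close>
  define e where "e t = k * k * (dp t)\<^sup>2 + (dv t)\<^sup>2" for t
  have "(e has_real_derivative 0) (at x within S)" if x: "x \<in> S" for x
  proof -
    have "(e has_real_derivative k * k * (2 * dp x * dv x) + 2 * dv x * (- (k * k) * dp x))
          (at x within S)"
      unfolding e_def dp_def dv_def
      by (rule derivative_eq_intros dg[OF x] dh[OF x] osc_pos_has_derivative[OF k]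
            osc_vel_has_derivative[OF k] refl | simp add: algebra_simps)+
    then show ?thesis
      by (simp add: algebra_simps)
  qed
  then obtain c where "\<And>x. x \<in> S \<Longrightarrow> e x = c"
    using has_field_derivative_zero_constant[OF S(1)] by blast
  moreover have "e 0 = 0"
    by (simp add: e_def dp_def dv_def)
  ultimately have "e t = 0"
    using S(2) t by metis
  then have "k * k * (dp t)\<^sup>2 = 0 \<and> (dv t)\<^sup>2 = 0"
    unfolding e_def by (subst (asm) add_nonneg_eq_0_iff) auto
  then show ?thesis
    using k by (simp add: dp_def dv_def)
qed

lemma solution_eigenmode_oscillates:
  assumes sol: "is_solution w1 w2 E u u'"
    and eig: "c1 * w1 + c2 = \<mu> * c1" "c1 + c2 * w2 = \<mu> * c2"
    and k: "k \<noteq> 0" "k * k = E - \<mu>"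
    and t: "t \<in> {0..1}"
  defines "g \<equiv> \<lambda>t. c1 * u t $ 1 + c2 * u t $ 2"
    and "h \<equiv> \<lambda>t. c1 * u' t $ 1 + c2 * u' t $ 2"
  shows "g t = osc_pos k (k * t) (g 0) (h 0) \<and> h t = osc_vel k (k * t) (g 0) (h 0)"
proof (rule harmonic_solution_unique[OF k(1) convex_real_interval(5) _ _ _ t])
  fix t :: real
  assume t: "t \<in> {0..1}"
  have du: "(u has_vector_derivative u' t) (at t within {0..1})"
    and du': "(u' has_vector_derivative (Vpot w1 w2 *v u t - E *\<^sub>R u t)) (at t within {0..1})"
    using sol t unfolding is_solution_def by auto
  show "(g has_real_derivative h t) (at t within {0..1})"
    unfolding g_def h_def by (rule has_real_derivative_coord_combination[OF du])
  have "c1 * (Vpot w1 w2 *v u t - E *\<^sub>R u t) $ 1 + c2 * (Vpot w1 w2 *v u t - E *\<^sub>R u t) $ 2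
        = (c1 * w1 + c2) * u t $ 1 + (c1 + c2 * w2) * u t $ 2 - E * g t"
    unfolding Vpot_mult g_def by (simp add: algebra_simps)
  also have "\<dots> = - (k * k) * g t"
    unfolding eig k(2) g_def by (simp add: algebra_simps)
  finally show "(h has_real_derivative - (k * k) * g t) (at t within {0..1})"
    using has_real_derivative_coord_combination[OF du', of c1 c2] unfolding h_def by simp
qed simp

(* (1, a) and (-a, 1) are eigenvectors of Vpot w1 w2 for the eigenvalues w1 + a and w2 - a *)
locale normal_modes =
  fixes w1 w2 E a :: real
  assumes eigen_a: "a * a = 1 + a * w2 - a * w1"
    and E_gt_a: "w1 + a < E"
    and E_gt_b: "w2 - a < E"
begin

definition "ka = sqrt (E - w1 - a)"
definition "kb = sqrt (E - w2 + a)"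
definition "nn = 1 + a * a"

lemma ka_pos: "ka > 0" and kb_pos: "kb > 0"
  using E_gt_a E_gt_b by (simp_all add: ka_def kb_def)

lemma ka_nz: "ka \<noteq> 0" and kb_nz: "kb \<noteq> 0"
  using ka_pos kb_pos by simp_all

lemma ka_sq: "ka * ka = E - w1 - a" and kb_sq: "kb * kb = E - w2 + a"
  using E_gt_a E_gt_b by (simp_all add: ka_def kb_def)

lemma nn_nz: "nn \<noteq> 0"
  using add_pos_nonneg[of 1 "a * a"] by (simp add: nn_def)

definition pos_a :: "real^4 \<Rightarrow> real" where "pos_a s = s $ 1 + a * s $ 2"
definition pos_b :: "real^4 \<Rightarrow> real" where "pos_b s = s $ 2 - a * s $ 1"
definition vel_a :: "real^4 \<Rightarrow> real" where "vel_a s = s $ 3 + a * s $ 4"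
definition vel_b :: "real^4 \<Rightarrow> real" where "vel_b s = s $ 4 - a * s $ 3"

definition from_modes :: "real \<Rightarrow> real \<Rightarrow> real \<Rightarrow> real \<Rightarrow> real^4" where
  "from_modes pa pb va vb =
     vector [(pa - a * pb) / nn, (a * pa + pb) / nn, (va - a * vb) / nn, (a * va + vb) / nn]"

lemma modes_from_modes [simp]:
  "pos_a (from_modes pa pb va vb) = pa" "pos_b (from_modes pa pb va vb) = pb"
  "vel_a (from_modes pa pb va vb) = va" "vel_b (from_modes pa pb va vb) = vb"
  using nn_nz
  by (simp_all add: from_modes_def pos_a_def pos_b_def vel_a_def vel_b_def field_simps)
     (simp_all add: nn_def algebra_simps)

lemma from_modes_modes: "from_modes (pos_a s) (pos_b s) (vel_a s) (vel_b s) = s"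
  using nn_nz
  by (simp add: from_modes_def pos_a_def pos_b_def vel_a_def vel_b_def vec_eq_iff forall_4
      nn_def field_simps)

definition flow :: "real \<Rightarrow> real \<Rightarrow> real^4 \<Rightarrow> real^4" where
  "flow \<alpha> \<beta> s = from_modes (osc_pos ka \<alpha> (pos_a s) (vel_a s)) (osc_pos kb \<beta> (pos_b s) (vel_b s))
                            (osc_vel ka \<alpha> (pos_a s) (vel_a s)) (osc_vel kb \<beta> (pos_b s) (vel_b s))"

lemma flow_nth:
  "flow \<alpha> \<beta> s $ 1 = (osc_pos ka \<alpha> (pos_a s) (vel_a s) - a * osc_pos kb \<beta> (pos_b s) (vel_b s)) / nn"
  "flow \<alpha> \<beta> s $ 2 = (a * osc_pos ka \<alpha> (pos_a s) (vel_a s) + osc_pos kb \<beta> (pos_b s) (vel_b s)) / nn"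
  "flow \<alpha> \<beta> s $ 3 = (osc_vel ka \<alpha> (pos_a s) (vel_a s) - a * osc_vel kb \<beta> (pos_b s) (vel_b s)) / nn"
  "flow \<alpha> \<beta> s $ 4 = (a * osc_vel ka \<alpha> (pos_a s) (vel_a s) + osc_vel kb \<beta> (pos_b s) (vel_b s)) / nn"
  by (simp_all add: flow_def from_modes_def)

lemma flow_0 [simp]: "flow 0 0 s = s"
  by (simp add: flow_def from_modes_modes)

lemma flow_add: "flow \<alpha> \<beta> (flow \<alpha>' \<beta>' s) = flow (\<alpha> + \<alpha>') (\<beta> + \<beta>') s"
  unfolding flow_def[of \<alpha>' \<beta>'] by (simp add: flow_def osc_add ka_nz kb_nz)

lemma linear_flow: "linear (flow \<alpha> \<beta>)"
  using nn_nz ka_nz kb_nz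
  by (intro linearI) (simp_all add: flow_def from_modes_def pos_a_def pos_b_def vel_a_def vel_b_def
      vec_eq_iff forall_4 osc_pos_def osc_vel_def field_simps)

lemma matrix_flow_mult: "matrix (flow \<alpha> \<beta>) *v s = flow \<alpha> \<beta> s"
  using linear_flow by (simp add: matrix_works)

lemma inner_Jsymp_from_modes:
  "inner (from_modes pa pb va vb) (Jsymp *v from_modes pa' pb' va' vb')
     = (pa * va' - va * pa' + pb * vb' - vb * pb') / nn"
  using nn_nz
  by (simp add: Jsymp_mult from_modes_def inner_vec_def sum_4 field_simps)
     (simp add: nn_def algebra_simps)

lemma flow_preserves_form: "inner (flow \<alpha> \<beta> s) (Jsymp *v flow \<alpha> \<beta> t) = inner s (Jsymp *v t)"
proof -
  have "inner (flow \<alpha> \<beta> s) (Jsymp *v flow \<alpha> \<beta> t) = inner (flow 0 0 s) (Jsymp *v flow 0 0 t)"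
    unfolding flow_def inner_Jsymp_from_modes
    using osc_wronskian[OF ka_nz, of \<alpha> "pos_a s" "vel_a s" "pos_a t" "vel_a t"]
      osc_wronskian[OF kb_nz, of \<beta> "pos_b s" "vel_b s" "pos_b t" "vel_b t"]
    by (simp add: algebra_simps)
  then show ?thesis
    by simp
qed

lemma matrix_flow_Sp2: "matrix (flow \<alpha> \<beta>) \<in> Sp2"
  by (rule Sp2I_inner) (simp add: matrix_flow_mult flow_preserves_form)

lemma mpow_matrix_flow: "mpow (matrix (flow ka kb)) m = matrix (flow (real m * ka) (real m * kb))"
proof (induction m)
  case 0
  then show ?case
    by (simp add: matrix_eq matrix_flow_mult)
next
  case (Suc m)
  then show ?case
    by (simp add: matrix_eq matrix_flow_mult flow_add matrix_vector_mul_assoc[symmetric] algebra_simps)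
qed

lemma matrix_flow_tendsto_id:
  assumes "(\<lambda>N. cos (\<alpha> N)) \<longlonglongrightarrow> 1" "(\<lambda>N. sin (\<alpha> N)) \<longlonglongrightarrow> 0"
    and "(\<lambda>N. cos (\<beta> N)) \<longlonglongrightarrow> 1" "(\<lambda>N. sin (\<beta> N)) \<longlonglongrightarrow> 0"
  shows "(\<lambda>N. matrix (flow (\<alpha> N) (\<beta> N))) \<longlonglongrightarrow> mat 1"
proof (intro vec_tendstoI)
  fix i j
  have trig: "(\<lambda>N. cos (\<alpha> N)) \<longlonglongrightarrow> cos 0" "(\<lambda>N. sin (\<alpha> N)) \<longlonglongrightarrow> sin 0"
    "(\<lambda>N. cos (\<beta> N)) \<longlonglongrightarrow> cos 0" "(\<lambda>N. sin (\<beta> N)) \<longlonglongrightarrow> sin 0"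
    using assms by simp_all
  have "(\<lambda>N. flow (\<alpha> N) (\<beta> N) s $ 1) \<longlonglongrightarrow> flow 0 0 s $ 1"
    and "(\<lambda>N. flow (\<alpha> N) (\<beta> N) s $ 2) \<longlonglongrightarrow> flow 0 0 s $ 2"
    and "(\<lambda>N. flow (\<alpha> N) (\<beta> N) s $ 3) \<longlonglongrightarrow> flow 0 0 s $ 3"
    and "(\<lambda>N. flow (\<alpha> N) (\<beta> N) s $ 4) \<longlonglongrightarrow> flow 0 0 s $ 4" for s
    unfolding flow_nth osc_pos_def osc_vel_def
    by (intro trig tendsto_divide tendsto_diff tendsto_add tendsto_mult tendsto_const nn_nz ka_nz kb_nz)+
  then have "(\<lambda>N. flow (\<alpha> N) (\<beta> N) (axis j 1) $ i) \<longlonglongrightarrow> axis j 1 $ i"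
    using exhaust_4[of i] by auto
  then show "(\<lambda>N. matrix (flow (\<alpha> N) (\<beta> N)) $ i $ j) \<longlonglongrightarrow> mat 1 $ i $ j"
    by (simp add: matrix_def axis_def mat_def)
qed

definition sol :: "real^4 \<Rightarrow> real \<Rightarrow> real^2" where
  "sol s t = vector [flow (ka * t) (kb * t) s $ 1, flow (ka * t) (kb * t) s $ 2]"

definition sol' :: "real^4 \<Rightarrow> real \<Rightarrow> real^2" where
  "sol' s t = vector [flow (ka * t) (kb * t) s $ 3, flow (ka * t) (kb * t) s $ 4]"

lemma state_sol_0: "state (sol s 0) (sol' s 0) = s"
  by (simp add: state_def sol_def sol'_def vec_eq_iff forall_4)

lemma state_sol_1: "state (sol s 1) (sol' s 1) = flow ka kb s"
  by (simp add: state_def sol_def sol'_def vec_eq_iff forall_4)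

lemma is_solution_sol: "is_solution w1 w2 E (sol s) (sol' s)"
  unfolding is_solution_def
proof (intro ballI conjI)
  fix t :: real
  show "(sol s has_vector_derivative sol' s t) (at t within {0..1})"
    unfolding sol_def sol'_def flow_nth
    by (rule has_vector_derivative_vector2)
       (rule derivative_eq_intros osc_pos_has_derivative[OF ka_nz] osc_pos_has_derivative[OF kb_nz]
          refl | simp add: nn_nz field_simps)+
  let ?pa = "osc_pos ka (ka * t) (pos_a s) (vel_a s)" and ?pb = "osc_pos kb (kb * t) (pos_b s) (vel_b s)"
  have "(sol' s has_vector_derivative
          vector [(- (ka * ka) * ?pa + a * (kb * kb) * ?pb) / nn,
                  (- (a * (ka * ka)) * ?pa - (kb * kb) * ?pb) / nn]) (at t within {0..1})"
    unfolding sol_def sol'_def flow_nth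
    by (rule has_vector_derivative_vector2)
       (rule derivative_eq_intros osc_vel_has_derivative[OF ka_nz] osc_vel_has_derivative[OF kb_nz]
          refl | simp add: nn_nz field_simps)+
  moreover have "vector [(- (ka * ka) * ?pa + a * (kb * kb) * ?pb) / nn,
                         (- (a * (ka * ka)) * ?pa - (kb * kb) * ?pb) / nn]
                 = Vpot w1 w2 *v sol s t - E *\<^sub>R sol s t"
  proof -
    have e1: "- (ka * ka) * ?pa + a * (kb * kb) * ?pb = w1 * (?pa - a * ?pb) + (a * ?pa + ?pb) - E * (?pa - a * ?pb)"
      and e2: "- (a * (ka * ka)) * ?pa - (kb * kb) * ?pb = (?pa - a * ?pb) + w2 * (a * ?pa + ?pb) - E * (a * ?pa + ?pb)"
      unfolding ka_sq kb_sq using eigen_a by algebra+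
    show ?thesis
      unfolding e1 e2 Vpot_mult sol_def flow_nth using nn_nz by (simp add: vec_eq_iff forall_2 field_simps)
  qed
  ultimately show "(sol' s has_vector_derivative (Vpot w1 w2 *v sol s t - E *\<^sub>R sol s t)) (at t within {0..1})"
    by simp
qed

lemma solution_endpoint:
  assumes sol: "is_solution w1 w2 E u u'"
  shows "state (u 1) (u' 1) = flow ka kb (state (u 0) (u' 0))"
proof -
  have t1: "(1::real) \<in> {0..1}"
    by simp
  have eig_a: "1 * w1 + a = (w1 + a) * 1" "1 + a * w2 = (w1 + a) * a"
    and eig_b: "- a * w1 + 1 = (w2 - a) * - a" "- a + 1 * w2 = (w2 - a) * 1"
    using eigen_a by (simp_all add: algebra_simps)
  have freq: "ka * ka = E - (w1 + a)" "kb * kb = E - (w2 - a)"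
    using ka_sq kb_sq by simp_all
  note mode_a = solution_eigenmode_oscillates[OF sol eig_a ka_nz freq(1) t1]
    and mode_b = solution_eigenmode_oscillates[OF sol eig_b kb_nz freq(2) t1]
  let ?s0 = "state (u 0) (u' 0)" and ?s1 = "state (u 1) (u' 1)"
  have "pos_a ?s1 = osc_pos ka ka (pos_a ?s0) (vel_a ?s0)"
    and "vel_a ?s1 = osc_vel ka ka (pos_a ?s0) (vel_a ?s0)"
    and "pos_b ?s1 = osc_pos kb kb (pos_b ?s0) (vel_b ?s0)"
    and "vel_b ?s1 = osc_vel kb kb (pos_b ?s0) (vel_b ?s0)"
    using mode_a mode_b by (simp_all add: pos_a_def pos_b_def vel_a_def vel_b_def algebra_simps)
  then show ?thesis
    using from_modes_modes[of ?s1] by (simp add: flow_def)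
qed

lemma transfer_eq: "transfer w1 w2 E = matrix (flow ka kb)"
  unfolding transfer_def
proof (rule the_equality)
  show "\<forall>u u'. is_solution w1 w2 E u u' \<longrightarrow> state (u 1) (u' 1) = matrix (flow ka kb) *v state (u 0) (u' 0)"
    by (simp add: matrix_flow_mult solution_endpoint)
next
  fix B
  assume B: "\<forall>u u'. is_solution w1 w2 E u u' \<longrightarrow> state (u 1) (u' 1) = B *v state (u 0) (u' 0)"
  have "B *v s = matrix (flow ka kb) *v s" for s
    using B[rule_format, OF is_solution_sol[of s]] by (simp add: state_sol_0 state_sol_1 matrix_flow_mult)
  then show "B = matrix (flow ka kb)"
    by (simp add: matrix_eq)
qed

lemma mpow_transfer_Sp2: "mpow (transfer w1 w2 E) m \<in> Sp2"
  by (simp add: transfer_eq mpow_matrix_flow matrix_flow_Sp2)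

lemma transfer_powers_return:
  obtains Q :: "nat \<Rightarrow> nat" where "\<And>N. 0 < Q N"
    and "(\<lambda>N. mpow (transfer w1 w2 E) (Q N)) \<longlonglongrightarrow> mat 1"
proof -
  obtain Q :: "nat \<Rightarrow> nat" where Q: "\<And>N. 0 < Q N"
    and cos: "\<And>i. i < 2 \<Longrightarrow> (\<lambda>N. cos (real (Q N) * [ka, kb] ! i)) \<longlonglongrightarrow> 1"
    and sin: "\<And>i. i < 2 \<Longrightarrow> (\<lambda>N. sin (real (Q N) * [ka, kb] ! i)) \<longlonglongrightarrow> 0"
    by (rule simultaneous_return_of_rotations[of 2 "\<lambda>i. [ka, kb] ! i"]) auto
  have "(\<lambda>N. matrix (flow (real (Q N) * ka) (real (Q N) * kb))) \<longlonglongrightarrow> mat 1"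
    using cos[of 0] cos[of 1] sin[of 0] sin[of 1] by (intro matrix_flow_tendsto_id) simp_all
  then show thesis
    by (intro that[OF Q]) (simp add: transfer_eq mpow_matrix_flow)
qed

end

lemma normal_modes_exist:
  assumes "E > (w1 + w2 + sqrt ((w1 - w2)\<^sup>2 + 4)) / 2"
  obtains a where "normal_modes w1 w2 E a"
proof -
  define r where "r = sqrt ((w1 - w2)\<^sup>2 + 4)"
  have r_sq: "r * r = (w1 - w2)\<^sup>2 + 4"
    unfolding r_def by simp
  have "\<bar>w2 - w1\<bar> < r"
    unfolding r_def by (rule real_less_rsqrt) (simp add: power2_abs power2_commute)
  then have r: "w2 - w1 < r" "w1 - w2 < r"
    by (simp_all add: abs_less_iff)
  have "normal_modes w1 w2 E ((w2 - w1 + r) / 2)"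
  proof
    show "(w2 - w1 + r) / 2 * ((w2 - w1 + r) / 2) = 1 + (w2 - w1 + r) / 2 * w2 - (w2 - w1 + r) / 2 * w1"
      using r_sq by (simp add: field_simps power2_eq_square)
    show "w1 + (w2 - w1 + r) / 2 < E" "w2 - (w2 - w1 + r) / 2 < E"
      using assms r unfolding r_def[symmetric] by (simp_all add: field_simps)
  qed
  then show thesis
    by (rule that)
qed

lemma Vpot_top_eigenvalue_le_2:
  assumes "w1 \<in> {0, 1}" "w2 \<in> {0, 1}"
  shows "(w1 + w2 + sqrt ((w1 - w2)\<^sup>2 + 4)) / 2 \<le> 2"
proof -
  have "sqrt 5 < (3::real)"
    by (simp add: real_sqrt_less_iff real_less_lsqrt)
  moreover have "sqrt 4 = (2::real)"
    by (simp add: real_sqrt_unique)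
  ultimately show ?thesis
    using assms by auto
qed

theorem proposition1:
  fixes Ob :: "mat4 set" and lg :: "mat4 \<Rightarrow> mat4"
  assumes O_sub: "Ob \<subseteq> Sp2"
    and O_nbhd: "\<exists>U. openin (top_of_set Sp2) U \<and> mat 1 \<in> U \<and> U \<subseteq> Ob"
    and O_log: "\<exists>W. W \<subseteq> sp2 \<and> homeomorphism W Ob mexp lg
                   \<and> mexp differentiable_on W \<and> lg differentiable_on Ob"
    and O_BG: "\<And>G. finite G \<Longrightarrow> G \<subseteq> Ob \<Longrightarrow>
                 (closure (gen_group G) = Sp2 \<longleftrightarrow> gen_lie (lg ` G) = sp2)"
  shows "\<forall>E::real. E > 2 \<longrightarrow> (\<forall>w1\<in>{0::real,1}. \<forall>w2\<in>{0::real,1}.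
           \<exists>m::nat. m \<ge> 1 \<and> mpow (transfer w1 w2 E) m \<in> Ob)"
proof (intro allI impI ballI)
  fix E w1 w2 :: real
  assume "E > 2" "w1 \<in> {0, 1}" "w2 \<in> {0, 1}"
  then have "E > (w1 + w2 + sqrt ((w1 - w2)\<^sup>2 + 4)) / 2"
    using Vpot_top_eigenvalue_le_2[of w1 w2] by linarith
  then obtain a where "normal_modes w1 w2 E a"
    by (rule normal_modes_exist)
  then interpret normal_modes w1 w2 E a .
  obtain Q :: "nat \<Rightarrow> nat" where Q: "\<And>N. 0 < Q N"
    and powers: "(\<lambda>N. mpow (transfer w1 w2 E) (Q N)) \<longlonglongrightarrow> mat 1"
    using transfer_powers_return by blast
  obtain T where T: "open T" "mat 1 \<in> T" "Sp2 \<inter> T \<subseteq> Ob"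
    using O_nbhd by (auto simp: openin_open)
  obtain N where "mpow (transfer w1 w2 E) (Q N) \<in> T"
    using topological_tendstoD[OF powers T(1,2)] by (auto simp: eventually_sequentially)
  then show "\<exists>m::nat. m \<ge> 1 \<and> mpow (transfer w1 w2 E) m \<in> Ob"
    using Q[of N] T(3) mpow_transfer_Sp2 by (intro exI[of _ "Q N"]) auto
qed

end
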